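(* Let $n\ge 3$ and let $\mathcal{P}=(V_0,\dots,V_{n-1})$ be an $n$-gon. Then $\mathcal{P}$ is strictly convex if and only if $\mathcal{P}$ is c-strictly monotone, i.e. if and only if $\mathcal{P}$ is locally-ordinary and, writing $(\alpha_0,\dots,\alpha_{n-1})=\arg\mathcal{P}$, there is $k\in\{0,\dots,n-1\}$ with either $\alpha_k<\dots<\alpha_{n-1}<\alpha_0<\dots<\alpha_{k-1}$ or $\alpha_k>\dots>\alpha_{n-1}>\alpha_0>\dots>\alpha_{k-1}$ (for $k=0$ these chains read $\alpha_0<\dots<\alpha_{n-1}$, resp. $\alpha_0>\dots>\alpha_{n-1}$).
   Context: A polygon (or $n$-gon) is any finite sequence $\mathcal{P}=(V_0,\dots,V_{n-1})$ of points of $\mathbb{R}^2$; indices are taken cyclically, $V_n:=V_0$. Its edges are the segments $[V_i,V_{i+1}]=\operatorname{conv}\{V_i,V_{i+1}\}$, $i\in\{0,\dots,n-1\}$, and $\operatorname{conv}\mathcal{P}:=\operatorname{conv}\{V_0,\dots,V_{n-1}\}$. $\mathcal{P}$ is convex if $\bigcup_{i=0}^{n-1}[V_i,V_{i+1}]=\partial\operatorname{conv}\mathcal{P}$. $\mathcal{P}$ is strict if for any three distinct indices $i,j,k$ the points $V_i,V_j,V_k$ are non-collinear; strictly convex means strict and convex. $\mathcal{P}$ is locally-ordinary if $V_i\ne V_{i+1}$ for all $i\in\{0,\dots,n-1\}$. For a nonzero vector $\vec v=(x,y)$ with $r=\sqrt{x^2+y^2}$, $\arg\vec v$ is the unique $\psi\in[0,2\pi)$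 with $x=r\cos\psi$, $y=r\sin\psi$. For a locally-ordinary polygon, $\arg\mathcal{P}:=(\arg(V_1-V_0),\dots,\arg(V_n-V_{n-1}))$. The notions c-increasing / c-decreasing / c-strictly monotone are defined only for locally-ordinary polygons, as in the claim. *)

theory Defs
  imports "HOL-Analysis.Analysis"
begin

text \<open>An n-gon is given by a map V :: nat => real \<times> real, of which only the
values V 0, ..., V (n-1) matter; indices are taken cyclically.\<close>

definition vtx :: "nat \<Rightarrow> (nat \<Rightarrow> real \<times> real) \<Rightarrow> nat \<Rightarrow> real \<times> real" where
  "vtx n V i = V (i mod n)"

definition poly_conv :: "nat \<Rightarrow> (nat \<Rightarrow> real \<times> real) \<Rightarrow> (real \<times> real) set" where
  "poly_conv n V = convex hull (V ` {..<n})"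

definition poly_convex :: "nat \<Rightarrow> (nat \<Rightarrow> real \<times> real) \<Rightarrow> bool" where
  "poly_convex n V \<longleftrightarrow>
     (\<Union>i<n. closed_segment (vtx n V i) (vtx n V (Suc i))) = frontier (poly_conv n V)"

definition poly_strict :: "nat \<Rightarrow> (nat \<Rightarrow> real \<times> real) \<Rightarrow> bool" where
  "poly_strict n V \<longleftrightarrow>
     (\<forall>i<n. \<forall>j<n. \<forall>k<n. i \<noteq> j \<and> i \<noteq> k \<and> j \<noteq> k \<longrightarrow> \<not> collinear {V i, V j, V k})"

definition strictly_convex_poly :: "nat \<Rightarrow> (nat \<Rightarrow> real \<times> real) \<Rightarrow> bool" where
  "strictly_convex_poly n V \<longleftrightarrow> poly_strict n V \<and> poly_convex n V"

definition locally_ordinary :: "nat \<Rightarrow> (nat \<Rightarrow> real \<times> real) \<Rightarrow> bool" where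
  "locally_ordinary n V \<longleftrightarrow> (\<forall>i<n. vtx n V i \<noteq> vtx n V (Suc i))"

definition vec_arg :: "real \<times> real \<Rightarrow> real" where
  "vec_arg v = (THE \<psi>. 0 \<le> \<psi> \<and> \<psi> < 2 * pi \<and>
      fst v = sqrt ((fst v)\<^sup>2 + (snd v)\<^sup>2) * cos \<psi> \<and>
      snd v = sqrt ((fst v)\<^sup>2 + (snd v)\<^sup>2) * sin \<psi>)"

definition poly_arg :: "nat \<Rightarrow> (nat \<Rightarrow> real \<times> real) \<Rightarrow> nat \<Rightarrow> real" where
  "poly_arg n V i = vec_arg (vtx n V (Suc i) - vtx n V i)"

definition c_strictly_increasing :: "nat \<Rightarrow> (nat \<Rightarrow> real \<times> real) \<Rightarrow> bool" where
  "c_strictly_increasing n V \<longleftrightarrow> locally_ordinary n V \<and>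
     (\<exists>k<n. \<forall>j. Suc j < n \<longrightarrow>
        poly_arg n V ((k + j) mod n) < poly_arg n V ((k + Suc j) mod n))"

definition c_strictly_decreasing :: "nat \<Rightarrow> (nat \<Rightarrow> real \<times> real) \<Rightarrow> bool" where
  "c_strictly_decreasing n V \<longleftrightarrow> locally_ordinary n V \<and>
     (\<exists>k<n. \<forall>j. Suc j < n \<longrightarrow>
        poly_arg n V ((k + j) mod n) > poly_arg n V ((k + Suc j) mod n))"

definition c_strictly_monotone :: "nat \<Rightarrow> (nat \<Rightarrow> real \<times> real) \<Rightarrow> bool" where
  "c_strictly_monotone n V \<longleftrightarrow> c_strictly_increasing n V \<or> c_strictly_decreasing n V"

end

theory Submission
  imports Defs
begin

text \<open>Both conditions are equivalent to an orientation \<open>s \<in> {1, -1}\<close> such that every vertex off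
  an edge lies strictly on the \<open>s\<close>-side of that edge's line.

  From strict convexity this comes from a supporting line at the midpoint of each edge, the
  sides of consecutive edges agreeing. Conversely such a polygon is strict, since a vertex between
  two others would force one of them onto the line of its edge, and convex, since a point of the
  frontier has a supporting line whose maximizing vertices are the two ends of one edge.

  Under the orientation condition every turn \<open>\<alpha>\<^sub>i \<rightarrow> \<alpha>\<^sub>i\<^sub>+\<^sub>1\<close> of the edge arguments has
  \<open>s sin(\<alpha>\<^sub>i\<^sub>+\<^sub>1 - \<alpha>\<^sub>i) > 0\<close>, so \<open>s \<alpha>\<close> can decrease only by more than \<open>\<pi>\<close>; this happens
  exactly where the polygon stops going down and starts going up (for \<open>s = 1\<close>), i.e. at the
  unique lowest-leftmost vertex, so \<open>s \<alpha>\<close> is cyclically increasing. Conversely, if \<open>s \<alpha>\<close> is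
  cyclically increasing, the edge directions unwrap to a strictly increasing sequence of angles
  winding exactly once; the cross product of an edge with the vector to a later vertex is then a
  partial sum of \<open>r\<^sub>t sin \<phi>\<^sub>t\<close> with \<open>0 = \<phi>\<^sub>0 < \<phi>\<^sub>1 < \<dots> < 2\<pi>\<close>, and such partial sums
  are positive because the full sum (the closed polygon) is zero.\<close>

section \<open>The cross product in the plane\<close>

definition cross :: "real \<times> real \<Rightarrow> real \<times> real \<Rightarrow> real" where
  "cross a b = fst a * snd b - snd a * fst b"

lemma cross_add_right [simp]: "cross a (b + c) = cross a b + cross a c"
  and cross_diff_right [simp]: "cross a (b - c) = cross a b - cross a c"
  and cross_minus_right [simp]: "cross a (- b) = - cross a b"
  and cross_scaleR_right [simp]: "cross a (r *\<^sub>R b) = r * cross a b"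
  and cross_self [simp]: "cross a a = 0"
  and cross_zero_right [simp]: "cross a 0 = 0"
  and cross_zero_left [simp]: "cross 0 a = 0"
  and cross_antisym: "cross b a = - cross a b"
  by (simp_all add: cross_def algebra_simps)

lemma cross_sum_right: "cross a (sum f S) = (\<Sum>t\<in>S. cross a (f t))"
  by (induction S rule: infinite_finite_induct) auto

lemma cross_polar:
  "cross (r * cos a, r * sin a) (r' * cos b, r' * sin b) = r * r' * sin (b - a)"
  by (simp add: cross_def sin_diff algebra_simps)

lemma cross_cramer: "cross p q *\<^sub>R u = cross u q *\<^sub>R p + cross p u *\<^sub>R q"
  by (cases p; cases q; cases u) (simp add: cross_def algebra_simps)

lemma cross_decompose:
  assumes "cross p q \<noteq> 0"
  shows "u = (cross u q / cross p q) *\<^sub>R p + (cross p u / cross p q) *\<^sub>R q"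
proof -
  have "u = inverse (cross p q) *\<^sub>R (cross u q *\<^sub>R p + cross p u *\<^sub>R q)"
    using assms by (metis cross_cramer left_inverse scaleR_one scaleR_scaleR)
  then show ?thesis
    by (simp only: scaleR_add_right scaleR_scaleR divide_inverse_commute)
qed

lemma orthogonal_independent_eq_0:
  assumes "inner a p = 0" "inner a q = 0" "cross p q \<noteq> 0"
  shows "a = 0"
proof -
  have "cross p q * inner a u = 0" for u
    using arg_cong[OF cross_cramer[of p q u], of "inner a"] assms(1,2)
    by (simp add: inner_add_right)
  then show ?thesis
    using assms(3) by (metis inner_eq_zero_iff mult_eq_0_iff)
qed

lemma cross_mult_cross: "cross e a * cross e w = inner e e * inner a w - inner e a * inner e w"
  by (cases e; cases a; cases w) (simp add: cross_def algebra_simps)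

lemma collinear_on_line:
  fixes p q r :: "real \<times> real"
  assumes "a \<noteq> 0" "inner a p = c" "inner a q = c" "inner a r = c"
  shows "collinear {p, q, r}"
  unfolding collinear_def
proof (intro exI[of _ "(- snd a, fst a)"] ballI)
  fix x y assume "x \<in> {p, q, r}" "y \<in> {p, q, r}"
  then have zero: "cross (x - y) (- snd a, fst a) = 0"
    using assms by (auto simp: cross_def inner_prod_def algebra_simps)
  have "cross a (- snd a, fst a) \<noteq> 0"
    using assms(1) by (simp add: cross_def prod_eq_iff add_nonneg_eq_0_iff)
  from cross_decompose[OF this, of "x - y"]
  have "x - y = (cross a (x - y) / cross a (- snd a, fst a)) *\<^sub>R (- snd a, fst a)"
    by (simp only: zero div_0 scaleR_zero_left add_0_left)
  then show "\<exists>c. x - y = c *\<^sub>R (- snd a, fst a)" ..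
qed

lemma abs_eq_1_cases: "\<bar>\<sigma>\<bar> = 1 \<Longrightarrow> \<sigma> = 1 \<or> \<sigma> = (-1 :: real)"
  by linarith

lemma cross_signed_polar:
  assumes "\<bar>\<sigma>\<bar> = 1"
  shows "\<sigma> * cross (r * cos a, r * (\<sigma> * sin a)) (r' * cos b, r' * (\<sigma> * sin b)) = r * r' * sin (b - a)"
proof -
  have "\<sigma> * \<sigma> = 1" using abs_eq_1_cases[OF assms] by auto
  then show ?thesis
    by (simp add: cross_def sin_diff algebra_simps) (simp add: mult.assoc[symmetric])
qed

lemma cos_sin_signed_angle:
  assumes "\<bar>\<sigma>\<bar> = 1" "\<sigma> * \<alpha> = \<theta> - 2 * real m * pi"
  shows "cos \<alpha> = cos \<theta> \<and> sin \<alpha> = \<sigma> * sin \<theta>"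
  using abs_eq_1_cases[OF assms(1)]
proof
  assume "\<sigma> = 1"
  then show ?thesis
    using assms(2) by (simp add: cos_diff sin_diff)
next
  assume "\<sigma> = -1"
  then have "\<alpha> = 2 * real m * pi - \<theta>" using assms(2) by simp
  then show ?thesis
    using \<open>\<sigma> = -1\<close> by (simp add: cos_diff sin_diff)
qed

section \<open>Arguments of plane vectors\<close>

lemma vec_arg_polar:
  fixes v :: "real \<times> real"
  assumes "v \<noteq> 0"
  shows "0 \<le> vec_arg v" "vec_arg v < 2 * pi"
    and "v = (norm v * cos (vec_arg v), norm v * sin (vec_arg v))"
proof -
  obtain x y where v: "v = (x, y)" by (cases v)
  define z where "z = Complex x y"
  have r: "norm v = sqrt (x\<^sup>2 + y\<^sup>2)" "norm z = sqrt (x\<^sup>2 + y\<^sup>2)"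
    by (simp_all add: v z_def norm_Pair cmod_def)
  have "z \<noteq> 0" using assms by (auto simp: v z_def complex_eq_iff zero_prod_def)
  then have r0: "0 < sqrt (x\<^sup>2 + y\<^sup>2)" using r(2) by (metis zero_less_norm_iff)
  have polar: "x = sqrt (x\<^sup>2 + y\<^sup>2) * cos t \<and> y = sqrt (x\<^sup>2 + y\<^sup>2) * sin t \<longleftrightarrow>
      complex_of_real (sqrt (x\<^sup>2 + y\<^sup>2)) * exp (\<i> * complex_of_real t) = z" for t
    by (auto simp: z_def complex_eq_iff Re_exp Im_exp)
  have "vec_arg v = Arg2pi z"
    unfolding vec_arg_def v fst_conv snd_conv
  proof (rule the_equality)
    show "0 \<le> Arg2pi z \<and> Arg2pi z < 2 * pi \<and>
        x = sqrt (x\<^sup>2 + y\<^sup>2) * cos (Arg2pi z) \<and> y = sqrt (x\<^sup>2 + y\<^sup>2) * sin (Arg2pi z)"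
      using Arg2pi[of z] Arg2pi_eq[of z] polar[of "Arg2pi z"] r(2) by auto
  qed (use polar Arg2pi_unique r0 in blast)
  then show "0 \<le> vec_arg v" "vec_arg v < 2 * pi"
      "v = (norm v * cos (vec_arg v), norm v * sin (vec_arg v))"
    using Arg2pi[of z] Arg2pi_eq[of z] polar[of "Arg2pi z"] r by (auto simp: v)
qed

lemma cross_vec_arg:
  "p \<noteq> 0 \<Longrightarrow> q \<noteq> 0 \<Longrightarrow> cross p q = norm p * norm q * sin (vec_arg q - vec_arg p)"
  using vec_arg_polar(3)[of p] vec_arg_polar(3)[of q] cross_polar by metis

definition lexpos :: "real \<times> real \<Rightarrow> bool" where
  "lexpos v \<longleftrightarrow> 0 < snd v \<or> (snd v = 0 \<and> 0 < fst v)"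

lemma lexpos_add: "lexpos u \<Longrightarrow> lexpos v \<Longrightarrow> lexpos (u + v)"
  by (auto simp: lexpos_def)

lemma lexpos_scaleR_iff: "0 < c \<Longrightarrow> lexpos (c *\<^sub>R v) \<longleftrightarrow> lexpos v"
  by (auto simp: lexpos_def zero_less_mult_iff)

lemma lexpos_minus: "lexpos v \<Longrightarrow> \<not> lexpos (- v)"
  by (auto simp: lexpos_def)

lemma lexpos_or_minus: "v \<noteq> 0 \<Longrightarrow> lexpos v \<or> lexpos (- v)"
  by (cases v) (auto simp: lexpos_def zero_prod_def)

lemma lexpos_iff_vec_arg_less_pi:
  assumes "v \<noteq> 0"
  shows "lexpos v \<longleftrightarrow> vec_arg v < pi"
proof -
  let ?t = "vec_arg v"
  have r: "0 < norm v" using assms by simp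
  have v: "snd v = norm v * sin ?t" "fst v = norm v * cos ?t"
    using vec_arg_polar(3)[OF assms] by (metis snd_conv, metis fst_conv)
  have t: "0 \<le> ?t" "?t < 2 * pi" using vec_arg_polar[OF assms] by auto
  consider "?t = 0" | "0 < ?t" "?t < pi" | "?t = pi" | "pi < ?t"
    using t by linarith
  then show ?thesis
  proof cases
    case 2
    then show ?thesis using sin_gt_zero[of ?t] r v by (simp add: lexpos_def)
  next
    case 4
    then show ?thesis
      using sin_lt_zero[of ?t] mult_pos_neg[OF r, of "sin ?t"] t v by (auto simp: lexpos_def)
  qed (use r v in \<open>auto simp: lexpos_def\<close>)
qed

lemma lexpos_if_arg_descent:
  assumes "p \<noteq> 0" "q \<noteq> 0" "0 < s * cross p q" "s * (vec_arg q - vec_arg p) < 0"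
  shows "lexpos (s *\<^sub>R q)" "lexpos (s *\<^sub>R (- p))"
proof -
  let ?a = "vec_arg p" and ?b = "vec_arg q"
  have "0 < s * sin (?b - ?a) * (norm p * norm q)"
    using assms(3) cross_vec_arg[OF assms(1,2)] by (simp add: ac_simps)
  then have sin: "0 < s * sin (?b - ?a)"
    using assms(1,2) zero_less_mult_pos2[of "s * sin (?b - ?a)" "norm p * norm q"] by simp
  have ab: "0 \<le> ?a" "?a < 2 * pi" "0 \<le> ?b" "?b < 2 * pi"
    using vec_arg_polar assms(1,2) by auto
  have big_turn: "pi < d" if "0 < d" "d < 2 * pi" "sin d < 0" for d
    using sin_ge_zero[of d] that by linarith
  have "lexpos (s *\<^sub>R q) \<and> lexpos (s *\<^sub>R (- p))"
  proof (cases "0 < s")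
    case True
    have "sin (?a - ?b) = - sin (?b - ?a)"
      by (metis minus_diff_eq sin_minus)
    then have "sin (?a - ?b) < 0" "?b < ?a"
      using sin assms(4) True by (simp_all add: zero_less_mult_iff mult_less_0_iff)
    then have "pi < ?a - ?b"
      using big_turn[of "?a - ?b"] ab by simp
    then have "lexpos q" "\<not> lexpos p"
      using lexpos_iff_vec_arg_less_pi assms(1,2) ab by auto
    then show ?thesis
      using lexpos_or_minus[OF assms(1)] lexpos_scaleR_iff[OF True, of q]
        lexpos_scaleR_iff[OF True, of "- p"] by blast
  next
    case False
    then have "s < 0" using assms(3) by (cases "s = 0") auto
    have "sin (?b - ?a) < 0" "?a < ?b"
      using sin assms(4) \<open>s < 0\<close> by (simp_all add: zero_less_mult_iff mult_less_0_iff)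
    then have "pi < ?b - ?a"
      using big_turn[of "?b - ?a"] ab by simp
    then have "lexpos p" "\<not> lexpos q"
      using lexpos_iff_vec_arg_less_pi assms(1,2) ab by auto
    moreover have "s *\<^sub>R q = (- s) *\<^sub>R (- q)" "s *\<^sub>R (- p) = (- s) *\<^sub>R p"
      by simp_all
    moreover have "0 < - s" using \<open>s < 0\<close> by simp
    ultimately show ?thesis
      using lexpos_or_minus[OF assms(2)] lexpos_scaleR_iff[of "- s"] by metis
  qed
  then show "lexpos (s *\<^sub>R q)" "lexpos (s *\<^sub>R (- p))" by auto
qed

section \<open>Sums of sines and cyclically increasing sequences\<close>

lemma partial_sum_sin_pos:
  fixes w \<phi> :: "nat \<Rightarrow> real"
  assumes w: "\<And>t. t < n \<Longrightarrow> 0 < w t"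
    and mono: "strict_mono_on {..<n} \<phi>"
    and wind: "\<And>t. t < n \<Longrightarrow> \<phi> t < \<phi> 0 + 2 * pi"
    and total: "(\<Sum>t<n. w t * sin (\<phi> t - \<phi> 0)) = 0"
    and u: "2 \<le> u" "u < n"
  shows "0 < (\<Sum>t<u. w t * sin (\<phi> t - \<phi> 0))"
proof -
  let ?g = "\<lambda>t. w t * sin (\<phi> t - \<phi> 0)"
  have less: "\<phi> t < \<phi> t'" if "t < t'" "t' < n" for t t'
    using strict_mono_onD[OF mono] that by simp
  show ?thesis
  proof (cases "\<phi> (u - 1) - \<phi> 0 < pi")
    case True
    have "0 < ?g (Suc t)" if "t < u - 1" for t
    proof -
      have "\<phi> (Suc t) \<le> \<phi> (u - 1)"
        using strict_mono_on_leD[OF mono, of "Suc t" "u - 1"] that u by simp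
      then have "sin (\<phi> (Suc t) - \<phi> 0) > 0"
        using less[of 0 "Suc t"] that u True by (intro sin_gt_zero) auto
      then show ?thesis using w[of "Suc t"] that u by simp
    qed
    then have "0 < (\<Sum>t<u - 1. ?g (Suc t))"
      using u by (intro sum_pos) (auto simp: lessThan_empty_iff)
    moreover have "(\<Sum>t<u. ?g t) = ?g 0 + (\<Sum>t<u - 1. ?g (Suc t))"
      using sum.lessThan_Suc_shift[of ?g "u - 1"] u by simp
    ultimately show ?thesis by simp
  next
    case False
    have "?g t < 0" if "t \<in> {u..<n}" for t
    proof -
      have "\<phi> (u - 1) < \<phi> t" using that u by (intro less) auto
      then have "sin (\<phi> t - \<phi> 0) < 0"
        using wind[of t] that False by (intro sin_lt_zero) auto
      then show ?thesis using w[of t] that by (simp add: mult_pos_neg)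
    qed
    then have "0 < (\<Sum>t\<in>{u..<n}. - ?g t)"
      using u by (intro sum_pos) auto
    moreover have "(\<Sum>t<n. ?g t) = (\<Sum>t<u. ?g t) + (\<Sum>t\<in>{u..<n}. ?g t)"
      using sum.atLeastLessThan_concat[of 0 u n ?g] u by (simp add: lessThan_atLeast0)
    ultimately show ?thesis using total by (simp add: sum_negf)
  qed
qed

lemma mod_add_neq:
  fixes n :: nat
  shows "0 < d \<Longrightarrow> d < n \<Longrightarrow> (i + d) mod n \<noteq> i mod n"
  by (metis add_diff_cancel_left' dvd_imp_le le_add1 mod_eq_dvd_iff_nat not_less)

definition cyclically_increasing :: "nat \<Rightarrow> (nat \<Rightarrow> real) \<Rightarrow> bool" where
  "cyclically_increasing n \<beta> \<longleftrightarrow>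
     (\<exists>k<n. \<forall>j. Suc j < n \<longrightarrow> \<beta> ((k + j) mod n) < \<beta> ((k + Suc j) mod n))"

lemma cyclically_increasingI:
  fixes \<beta> :: "nat \<Rightarrow> real"
  assumes n: "0 < n" and periodic: "\<And>i. \<beta> (i mod n) = \<beta> i"
    and neq: "\<And>i. \<beta> (Suc i) \<noteq> \<beta> i"
    and descent_unique: "\<And>i m. \<beta> (Suc i) < \<beta> i \<Longrightarrow> \<beta> (Suc m) < \<beta> m \<Longrightarrow> Suc i mod n = Suc m mod n"
  shows "cyclically_increasing n \<beta>"
  unfolding cyclically_increasing_def
proof (cases "\<exists>i. \<beta> (Suc i) < \<beta> i")
  case True
  then obtain i where i: "\<beta> (Suc i) < \<beta> i" by blast
  show "\<exists>k<n. \<forall>j. Suc j < n \<longrightarrow> \<beta> ((k + j) mod n) < \<beta> ((k + Suc j) mod n)"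
  proof (intro exI[of _ "Suc i mod n"] conjI allI impI)
    fix j assume j: "Suc j < n"
    let ?t = "Suc i mod n + j"
    have "Suc ?t mod n = (Suc i + Suc j) mod n"
      by (metis add_Suc_right mod_add_left_eq)
    then have "Suc ?t mod n \<noteq> Suc i mod n" using mod_add_neq[of "Suc j" n "Suc i"] j by simp
    then have "\<beta> ?t < \<beta> (Suc ?t)"
      using descent_unique[OF _ i] neq[of ?t] by (metis linorder_neqE_linordered_idom)
    then show "\<beta> ((Suc i mod n + j) mod n) < \<beta> ((Suc i mod n + Suc j) mod n)"
      by (simp add: periodic)
  qed (use n in simp)
next
  case False
  then have "\<beta> j < \<beta> (Suc j)" for j using neq[of j] by (metis linorder_neqE_linordered_idom)
  then show "\<exists>k<n. \<forall>j. Suc j < n \<longrightarrow> \<beta> ((k + j) mod n) < \<beta> ((k + Suc j) mod n)"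
    using n by (intro exI[of _ 0]) (simp add: periodic)
qed

lemma cyclically_increasing_unwrap:
  fixes \<beta> :: "nat \<Rightarrow> real"
  assumes incr: "cyclically_increasing n \<beta>" and periodic: "\<And>i. \<beta> (i mod n) = \<beta> i"
    and width: "\<And>i j. \<beta> i < \<beta> j + 2 * pi"
  obtains k \<Phi> where "k < n" "strict_mono \<Phi>" "\<And>t. \<Phi> (t + n) = \<Phi> t + 2 * pi"
    "\<And>t. \<Phi> t = \<beta> (k + t) + 2 * pi * real (t div n)"
proof -
  obtain k where k: "k < n"
    and step: "\<And>j. Suc j < n \<Longrightarrow> \<beta> ((k + j) mod n) < \<beta> ((k + Suc j) mod n)"
    using incr unfolding cyclically_increasing_def by blast
  define \<Phi> where "\<Phi> t = \<beta> (k + t) + 2 * pi * real (t div n)" for t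
  have n: "0 < n" using k by simp
  have "\<Phi> t < \<Phi> (Suc t)" for t
  proof (cases "Suc t mod n = 0")
    case True
    then have "Suc t div n = Suc (t div n)"
      by (simp add: div_Suc)
    then show ?thesis using width[of "k + t" "k + Suc t"] by (simp add: \<Phi>_def algebra_simps)
  next
    case False
    then have "Suc (t mod n) = Suc t mod n" "Suc t div n = t div n"
      by (simp_all add: div_Suc mod_Suc split: if_splits)
    moreover have "\<beta> ((k + t mod n) mod n) < \<beta> ((k + Suc (t mod n)) mod n)"
      using step[of "t mod n"] \<open>Suc (t mod n) = Suc t mod n\<close> n by simp
    ultimately show ?thesis
      by (simp add: \<Phi>_def periodic mod_add_right_eq)
  qed
  then have "strict_mono \<Phi>" by (rule strict_mono_Suc_iff[THEN iffD2, rule_format])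
  moreover have "\<Phi> (t + n) = \<Phi> t + 2 * pi" for t
  proof -
    have "\<beta> (k + t + n) = \<beta> (k + t)"
      by (metis periodic mod_add_self2)
    then show ?thesis using n by (simp add: \<Phi>_def algebra_simps)
  qed
  ultimately show ?thesis using that k \<Phi>_def by blast
qed

lemma supporting_hyperplane_not_interior:
  fixes S :: "'a::euclidean_space set"
  assumes "convex S" "x \<in> S" "x \<notin> interior S"
  obtains a where "a \<noteq> 0" "\<And>y. y \<in> S \<Longrightarrow> inner a y \<le> inner a x"
proof (cases "interior S = {}")
  case True
  then obtain a b where a: "a \<noteq> 0" and S: "S \<subseteq> {x. a \<bullet> x = b}"
    using empty_interior_subset_hyperplane[OF assms(1)] by metis
  have "inner a y \<le> inner a x" if "y \<in> S" for y
    using subsetD[OF S that] subsetD[OF S assms(2)] by simp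
  with a show ?thesis by (rule that)
next
  case False
  have xr: "x \<notin> rel_interior S"
    using assms(3) rel_interior_nonempty_interior[OF False] by simp
  have xc: "x \<in> closure S" using assms(2) closure_subset by blast
  obtain a where a: "a \<noteq> 0" and le: "\<And>y. y \<in> closure S \<Longrightarrow> a \<bullet> x \<le> a \<bullet> y"
    using supporting_hyperplane_relative_frontier[OF assms(1) xc xr] by metis
  have "- a \<noteq> 0" using a by simp
  moreover have "inner (- a) y \<le> inner (- a) x" if "y \<in> S" for y
    using le[of y] that closure_subset by auto
  ultimately show ?thesis by (rule that)
qed

lemma convex_hull_maximizers:
  fixes S :: "'a::euclidean_space set"
  assumes "finite S" "x \<in> convex hull S" "\<And>y. y \<in> S \<Longrightarrow> inner a y \<le> inner a x"
  shows "x \<in> convex hull {y \<in> S. inner a y = inner a x}"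
proof -
  have "convex hull S \<subseteq> {y. inner a y \<le> inner a x}"
    using assms(3) by (intro hull_minimal) (auto simp: convex_halfspace_le)
  then have "convex hull S \<inter> {y. inner a y = inner a x} face_of convex hull S"
    by (intro face_of_Int_supporting_hyperplane_le) auto
  then obtain T where T: "T \<subseteq> S" "convex hull S \<inter> {y. inner a y = inner a x} = convex hull T"
    using face_of_convex_hull_subset[OF finite_imp_compact[OF assms(1)]] by metis
  then have "T \<subseteq> {y \<in> S. inner a y = inner a x}"
    using hull_subset[of T convex] by blast
  then show ?thesis using T(2) assms(2) hull_mono by blast
qed

definition edge :: "nat \<Rightarrow> (nat \<Rightarrow> real \<times> real) \<Rightarrow> nat \<Rightarrow> real \<times> real" where
  "edge n V i = vtx n V (Suc i) - vtx n V i"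

lemma vtx_mod [simp]: "vtx n V (i mod n) = vtx n V i"
  by (simp add: vtx_def)

lemma vtx_cong: "i mod n = j mod n \<Longrightarrow> vtx n V i = vtx n V j"
  by (simp add: vtx_def)

lemma vtx_less: "i < n \<Longrightarrow> vtx n V i = V i"
  by (simp add: vtx_def)

lemma vtx_Suc: "vtx n V (Suc i) = vtx n V i + edge n V i"
  by (simp add: edge_def)

lemma vtx_add_period [simp]: "vtx n V (i + n) = vtx n V i"
  by (simp add: vtx_def)

lemma edge_mod [simp]: "edge n V (i mod n) = edge n V i"
  by (simp add: edge_def vtx_def mod_Suc_eq)

lemma edge_add_period [simp]: "edge n V (i + n) = edge n V i"
  by (metis edge_mod mod_add_self2)

lemma poly_arg_edge: "poly_arg n V i = vec_arg (edge n V i)"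
  by (simp add: poly_arg_def edge_def)

lemma sum_edges: "(\<Sum>t<u. edge n V (i + t)) = vtx n V (i + u) - vtx n V i"
  using sum_lessThan_telescope[of "\<lambda>t. vtx n V (i + t)" u] by (simp add: edge_def)

lemma consecutive_mod_distinct:
  assumes "3 \<le> n"
  shows "Suc i mod n \<noteq> i mod n" "Suc (Suc i) mod n \<noteq> i mod n" "Suc (Suc i) mod n \<noteq> Suc i mod n"
  using mod_add_neq[of 1 n i] mod_add_neq[of 2 n i] mod_add_neq[of 1 n "Suc i"] assms by simp_all

lemma vertex_eq_edge_sum:
  assumes "0 < n" "j mod n \<noteq> i mod n" "j mod n \<noteq> Suc i mod n"
  obtains u where "2 \<le> u" "u < n" "vtx n V j - vtx n V i = (\<Sum>t<u. edge n V (i + t))"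
proof -
  define u where "u = (j + (n - i mod n)) mod n"
  have "(i + u) mod n = (i mod n + (j + (n - i mod n))) mod n"
    unfolding u_def by (metis mod_add_eq mod_mod_trivial)
  also have "i mod n + (j + (n - i mod n)) = j + n"
    using mod_less_divisor[OF assms(1), of i] by linarith
  also have "(j + n) mod n = j mod n"
    by simp
  finally have iu: "(i + u) mod n = j mod n" .
  then have "u \<noteq> 0" "u \<noteq> 1"
    using assms(2,3) by (metis add_0_right, metis Suc_eq_plus1)
  moreover have "u < n" using assms(1) by (simp add: u_def)
  moreover have "vtx n V j - vtx n V i = (\<Sum>t<u. edge n V (i + t))"
    using vtx_cong[OF iu] by (simp add: sum_edges)
  ultimately show ?thesis using that[of u] by linarith
qed

lemma locally_ordinary_edge_nonzero:
  assumes "locally_ordinary n V" "0 < n"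
  shows "edge n V i \<noteq> 0"
proof -
  have "vtx n V (i mod n) \<noteq> vtx n V (Suc (i mod n))"
    using assms(1) mod_less_divisor[OF assms(2)] unfolding locally_ordinary_def by blast
  moreover have "vtx n V (Suc (i mod n)) = vtx n V (Suc i)"
    by (metis mod_Suc_eq vtx_mod)
  ultimately show ?thesis
    by (simp add: edge_def)
qed

lemma strict_not_collinear:
  assumes "poly_strict n V" "0 < n" "Suc i mod n \<noteq> i mod n"
    and "j mod n \<noteq> i mod n" "j mod n \<noteq> Suc i mod n"
  shows "\<not> collinear {vtx n V i, vtx n V (Suc i), vtx n V j}"
  using assms unfolding poly_strict_def vtx_def by (metis mod_less_divisor)

lemma cross_diff_eq_inner:
  "s * cross e (y - v) = inner (s *\<^sub>R (- snd e, fst e)) y - inner (s *\<^sub>R (- snd e, fst e)) v"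
  by (simp add: cross_def inner_prod_def algebra_simps)

lemma convex_poly_conv: "convex (poly_conv n V)"
  by (simp add: poly_conv_def)

lemma poly_conv_compact: "compact (poly_conv n V)"
  unfolding poly_conv_def by (simp add: compact_convex_hull finite_imp_compact)

lemma vtx_in_poly_conv: "0 < n \<Longrightarrow> vtx n V j \<in> poly_conv n V"
  unfolding poly_conv_def vtx_def by (simp add: hull_inc)

section \<open>Oriented polygons\<close>

definition strictly_convex_oriented :: "nat \<Rightarrow> (nat \<Rightarrow> real \<times> real) \<Rightarrow> real \<Rightarrow> bool" where
  "strictly_convex_oriented n V s \<longleftrightarrow>
     (\<forall>i j. j mod n \<noteq> i mod n \<and> j mod n \<noteq> Suc i mod n \<longrightarrow>
        0 < s * cross (edge n V i) (vtx n V j - vtx n V i))"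

context
  fixes n V s
  assumes oriented: "strictly_convex_oriented n V s" and n: "3 \<le> n"
begin

lemma oriented_side:
  "j mod n \<noteq> i mod n \<Longrightarrow> j mod n \<noteq> Suc i mod n \<Longrightarrow>
    0 < s * cross (edge n V i) (vtx n V j - vtx n V i)"
  using oriented by (simp add: strictly_convex_oriented_def)

lemma oriented_side_le: "0 \<le> s * cross (edge n V i) (vtx n V j - vtx n V i)"
proof (cases "j mod n = i mod n \<or> j mod n = Suc i mod n")
  case True
  then have "vtx n V j = vtx n V i \<or> vtx n V j = vtx n V i + edge n V i"
    by (metis vtx_cong vtx_Suc)
  then show ?thesis by auto
qed (use oriented_side in \<open>auto intro: less_imp_le\<close>)

lemma oriented_turn: "0 < s * cross (edge n V i) (edge n V (Suc i))"
  using oriented_side[of "Suc (Suc i)" i] consecutive_mod_distinct[OF n, of i]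
  by (simp add: vtx_Suc)

lemma oriented_edge_nonzero: "edge n V i \<noteq> 0"
  using oriented_turn[of i] by auto

lemma oriented_locally_ordinary: "locally_ordinary n V"
  using oriented_edge_nonzero unfolding locally_ordinary_def edge_def by (metis right_minus_eq)

lemma oriented_vertices_distinct: "j mod n \<noteq> i mod n \<Longrightarrow> vtx n V j \<noteq> vtx n V i"
  using oriented_side[of j i] oriented_edge_nonzero[of i]
  by (cases "j mod n = Suc i mod n") (auto simp: vtx_cong[of j n "Suc i"] vtx_Suc)

lemma oriented_vertex_cone:
  assumes "k mod n \<noteq> i mod n" "k mod n \<noteq> Suc i mod n" "k mod n \<noteq> Suc (Suc i) mod n"
  obtains c d where "0 < c" "0 < d"
    "vtx n V k - vtx n V (Suc i) = c *\<^sub>R edge n V (Suc i) + d *\<^sub>R (- edge n V i)"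
proof -
  let ?p = "edge n V (Suc i)" and ?q = "- edge n V i" and ?u = "vtx n V k - vtx n V (Suc i)"
  have pq: "0 < s * cross ?p ?q"
    using oriented_turn[of i] by (simp add: cross_antisym[of ?p])
  have "cross ?u ?q = cross (edge n V i) (vtx n V k - vtx n V i)"
    by (simp add: vtx_Suc cross_def algebra_simps)
  then have uq: "0 < s * cross ?u ?q"
    using oriented_side[of k i] assms by simp
  have pu: "0 < s * cross ?p ?u"
    using oriented_side[of k "Suc i"] assms by simp
  have pos: "0 < x / c" if "0 < s * c" "0 < s * x" for c x :: real
    using that by (auto simp: zero_less_mult_iff zero_less_divide_iff)
  have "cross ?p ?q \<noteq> 0" using pq by auto
  then have "?u = (cross ?u ?q / cross ?p ?q) *\<^sub>R ?p + (cross ?p ?u / cross ?p ?q) *\<^sub>R ?q"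
    by (rule cross_decompose)
  then show ?thesis by (rule that[OF pos[OF pq uq] pos[OF pq pu]])
qed

lemma oriented_vertex_not_between:
  assumes "a mod n \<noteq> b mod n" "b mod n \<noteq> c mod n" "a mod n \<noteq> c mod n"
  shows "vtx n V b \<notin> closed_segment (vtx n V a) (vtx n V c)"
proof
  assume "vtx n V b \<in> closed_segment (vtx n V a) (vtx n V c)"
  then obtain t where t: "0 \<le> t" "t \<le> 1" "vtx n V b = (1 - t) *\<^sub>R vtx n V a + t *\<^sub>R vtx n V c"
    by (auto simp: in_segment)
  let ?X = "s * cross (edge n V b) (vtx n V a - vtx n V b)"
  let ?Y = "s * cross (edge n V b) (vtx n V c - vtx n V b)"
  have "(1 - t) *\<^sub>R (vtx n V a - vtx n V b) + t *\<^sub>R (vtx n V c - vtx n V b) = 0"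
    using t(3) by (simp add: algebra_simps)
  then have "s * cross (edge n V b)
      ((1 - t) *\<^sub>R (vtx n V a - vtx n V b) + t *\<^sub>R (vtx n V c - vtx n V b)) = 0"
    by simp
  then have "(1 - t) * ?X + t * ?Y = 0"
    by (simp only: cross_add_right cross_scaleR_right distrib_left mult.left_commute)
  moreover have "0 \<le> ?X" "0 \<le> ?Y" by (rule oriented_side_le)+
  then have "0 \<le> (1 - t) * ?X" "0 \<le> t * ?Y"
    using t(1,2) by simp_all
  ultimately have "(1 - t) * ?X = 0" "t * ?Y = 0" by linarith+
  moreover have "0 < ?X \<or> 0 < ?Y"
    using oriented_side[of a b] oriented_side[of c b] assms by (metis mod_mod_trivial)
  ultimately have "t = 1 \<or> t = 0" by auto
  then show False
    using t(3) oriented_vertices_distinct assms by auto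
qed

lemma oriented_imp_poly_strict: "poly_strict n V"
  unfolding poly_strict_def
proof (intro allI impI notI)
  fix i j k assume ijk: "i < n" "j < n" "k < n" "i \<noteq> j \<and> i \<noteq> k \<and> j \<noteq> k"
    and "collinear {V i, V j, V k}"
  then have "collinear {vtx n V i, vtx n V j, vtx n V k}" by (simp add: vtx_less)
  then show False
    using oriented_vertex_not_between[of j k i] oriented_vertex_not_between[of k i j]
      oriented_vertex_not_between[of i j k] ijk
    by (auto simp: collinear_between_cases between_mem_segment closed_segment_commute)
qed

lemma poly_conv_subset_halfplane:
  "poly_conv n V \<subseteq> {y. 0 \<le> s * cross (edge n V i) (y - vtx n V i)}"
  unfolding poly_conv_def
proof (intro hull_minimal subsetI)
  fix y assume "y \<in> V ` {..<n}"
  then obtain j where "y = vtx n V j" by (metis imageE lessThan_iff vtx_less)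
  then show "y \<in> {y. 0 \<le> s * cross (edge n V i) (y - vtx n V i)}"
    using oriented_side_le[of i j] by simp
qed (unfold cross_diff_eq_inner diff_ge_0_iff_ge, rule convex_halfspace_ge)

lemma oriented_edges_subset_frontier:
  assumes "x \<in> closed_segment (vtx n V i) (vtx n V (Suc i))"
  shows "x \<in> frontier (poly_conv n V)"
proof -
  define w where "w = s *\<^sub>R (- snd (edge n V i), fst (edge n V i))"
  have "s \<noteq> 0" using oriented_turn[of i] by auto
  then have "w \<noteq> 0"
    using oriented_edge_nonzero[of i] by (auto simp: w_def prod_eq_iff)
  have "0 < n" using n by simp
  then have "x \<in> poly_conv n V"
    using closed_segment_subset[OF vtx_in_poly_conv vtx_in_poly_conv convex_poly_conv] assms
    by blast
  moreover obtain t where "x = vtx n V i + t *\<^sub>R edge n V i"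
    using assms by (auto simp: in_segment vtx_Suc algebra_simps)
  then have "s * cross (edge n V i) (x - vtx n V i) = 0" by simp
  then have "x \<notin> interior {y. 0 \<le> s * cross (edge n V i) (y - vtx n V i)}"
    using \<open>w \<noteq> 0\<close> unfolding cross_diff_eq_inner diff_ge_0_iff_ge w_def[symmetric] by simp
  then have "x \<notin> interior (poly_conv n V)"
    using interior_mono[OF poly_conv_subset_halfplane[of i]] by auto
  ultimately show ?thesis
    using closure_subset by (auto simp: frontier_def)
qed

lemma oriented_edges_not_both_orthogonal:
  assumes "a \<noteq> 0"
  shows "\<not> (inner a (edge n V (Suc i)) = 0 \<and> inner a (edge n V i) = 0)"
proof -
  have "cross (edge n V i) (edge n V (Suc i)) \<noteq> 0"
    using oriented_turn[of i] by auto
  then show ?thesis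
    using orthogonal_independent_eq_0[of a "edge n V i" "edge n V (Suc i)"] assms by blast
qed

lemma oriented_support_nonadjacent:
  assumes "a \<noteq> 0" "inner a (edge n V (Suc i)) \<le> 0" "0 \<le> inner a (edge n V i)"
    and "k mod n \<noteq> i mod n" "k mod n \<noteq> Suc i mod n" "k mod n \<noteq> Suc (Suc i) mod n"
  shows "inner a (vtx n V k) < inner a (vtx n V (Suc i))"
proof -
  let ?p = "edge n V (Suc i)" and ?q = "edge n V i"
  obtain c d where "0 < c" "0 < d" and "vtx n V k - vtx n V (Suc i) = c *\<^sub>R ?p + d *\<^sub>R (- ?q)"
    using oriented_vertex_cone assms(4-6) by blast
  then have "inner a (vtx n V k - vtx n V (Suc i)) = c * inner a ?p - d * inner a ?q"
    by (simp add: inner_diff_right)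
  moreover have "c * inner a ?p - d * inner a ?q < 0"
  proof (cases "inner a ?p = 0")
    case True
    then have "0 < inner a ?q"
      using oriented_edges_not_both_orthogonal[OF assms(1), of i] assms(3) by simp
    then show ?thesis using True \<open>0 < d\<close> by simp
  next
    case False
    then have "c * inner a ?p < 0" using assms(2) \<open>0 < c\<close> by (simp add: mult_pos_neg)
    moreover have "0 \<le> d * inner a ?q" using assms(3) \<open>0 < d\<close> by simp
    ultimately show ?thesis by linarith
  qed
  ultimately show ?thesis by (simp add: inner_diff_right)
qed

lemma oriented_maximizers_on_edge:
  assumes "a \<noteq> 0" and max: "\<And>k. inner a (vtx n V k) \<le> inner a (vtx n V j)"
  obtains i where "\<And>k. inner a (vtx n V k) = inner a (vtx n V j) \<Longrightarrow>
    vtx n V k \<in> {vtx n V i, vtx n V (Suc i)}"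
proof -
  define i where "i = j + n - 1"
  have j: "vtx n V (Suc i) = vtx n V j"
    using n by (simp add: i_def)
  let ?p = "edge n V (Suc i)" and ?q = "edge n V i"
  have next_vtx: "vtx n V (Suc (Suc i)) = vtx n V j + ?p"
    using vtx_Suc[of n V "Suc i"] j by simp
  have prev_vtx: "vtx n V j = vtx n V i + ?q"
    using vtx_Suc[of n V i] j by simp
  have ap: "inner a ?p \<le> 0"
    using max[of "Suc (Suc i)"] unfolding next_vtx inner_add_right by simp
  have aq: "0 \<le> inner a ?q"
    using max[of i] unfolding prev_vtx inner_add_right by simp
  have near: "k mod n = i mod n \<or> k mod n = Suc i mod n \<or> k mod n = Suc (Suc i) mod n"
    if "inner a (vtx n V k) = inner a (vtx n V j)" for k
    using oriented_support_nonadjacent[OF assms(1) ap aq, of k] that j by auto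
  show ?thesis
  proof (cases "inner a ?p = 0")
    case True
    then have "inner a (vtx n V i) < inner a (vtx n V j)"
      using aq oriented_edges_not_both_orthogonal[OF assms(1), of i]
      unfolding prev_vtx inner_add_right by simp
    then show ?thesis
      using that[of "Suc i"] near j by (metis insert_iff vtx_cong less_irrefl)
  next
    case False
    then have "inner a (vtx n V (Suc (Suc i))) < inner a (vtx n V j)"
      using ap unfolding next_vtx inner_add_right by simp
    then show ?thesis
      using that[of i] near j by (metis insert_iff vtx_cong less_irrefl)
  qed
qed

lemma oriented_frontier_subset_edges:
  assumes "x \<in> frontier (poly_conv n V)"
  shows "\<exists>i<n. x \<in> closed_segment (vtx n V i) (vtx n V (Suc i))"
proof -
  have "0 < n" using n by simp
  have x: "x \<in> poly_conv n V" "x \<notin> interior (poly_conv n V)"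
    using assms compact_imp_closed[OF poly_conv_compact] by (auto simp: frontier_def)
  obtain a where "a \<noteq> 0" and a: "\<And>y. y \<in> poly_conv n V \<Longrightarrow> inner a y \<le> inner a x"
    using supporting_hyperplane_not_interior[OF convex_poly_conv x] by blast
  let ?M = "{y \<in> V ` {..<n}. inner a y = inner a x}"
  have "x \<in> convex hull ?M"
  proof (rule convex_hull_maximizers)
    show "x \<in> convex hull V ` {..<n}" using x(1) by (simp add: poly_conv_def)
    show "inner a y \<le> inner a x" if "y \<in> V ` {..<n}" for y
      using a that by (simp add: poly_conv_def hull_inc)
  qed simp
  then obtain y where "y \<in> ?M"
    by (metis all_not_in_conv convex_hull_empty empty_iff)
  then obtain j where j: "inner a (vtx n V j) = inner a x"
    by (metis (mono_tags, lifting) imageE lessThan_iff mem_Collect_eq vtx_less)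
  have "inner a (vtx n V k) \<le> inner a (vtx n V j)" for k
    using a[OF vtx_in_poly_conv[OF \<open>0 < n\<close>]] j by simp
  then obtain i where i: "\<And>k. inner a (vtx n V k) = inner a (vtx n V j) \<Longrightarrow>
      vtx n V k \<in> {vtx n V i, vtx n V (Suc i)}"
    using oriented_maximizers_on_edge[OF \<open>a \<noteq> 0\<close>] by blast
  have "?M \<subseteq> {vtx n V i, vtx n V (Suc i)}"
  proof
    fix y assume "y \<in> ?M"
    then obtain k where "k < n" "y = V k" "inner a (V k) = inner a x" by blast
    then show "y \<in> {vtx n V i, vtx n V (Suc i)}"
      using i[of k] j by (simp add: vtx_less)
  qed
  then have "convex hull ?M \<subseteq> closed_segment (vtx n V i) (vtx n V (Suc i))"
    unfolding segment_convex_hull by (rule hull_mono)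
  moreover have "vtx n V (Suc (i mod n)) = vtx n V (Suc i)"
    by (metis mod_Suc_eq vtx_mod)
  ultimately have "x \<in> closed_segment (vtx n V (i mod n)) (vtx n V (Suc (i mod n)))"
    using \<open>x \<in> convex hull ?M\<close> by auto
  then show ?thesis
    using \<open>0 < n\<close> by (intro exI[of _ "i mod n"]) simp
qed

lemma oriented_imp_strictly_convex: "strictly_convex_poly n V"
proof -
  have "poly_convex n V"
    unfolding poly_convex_def
    using oriented_edges_subset_frontier oriented_frontier_subset_edges by blast
  then show ?thesis
    using oriented_imp_poly_strict by (simp add: strictly_convex_poly_def)
qed

lemma oriented_descent_lexpos:
  assumes descent: "s * (poly_arg n V (Suc i) - poly_arg n V i) < 0"
    and k: "k mod n \<noteq> Suc i mod n"
  shows "lexpos (s *\<^sub>R (vtx n V k - vtx n V (Suc i)))"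
proof -
  let ?p = "edge n V i" and ?q = "edge n V (Suc i)"
  have lex: "lexpos (s *\<^sub>R ?q)" "lexpos (s *\<^sub>R (- ?p))"
    using lexpos_if_arg_descent[OF oriented_edge_nonzero oriented_edge_nonzero
        oriented_turn] descent
    by (simp_all add: poly_arg_edge)
  consider "k mod n = i mod n" | "k mod n = Suc (Suc i) mod n"
    | "k mod n \<noteq> i mod n" "k mod n \<noteq> Suc (Suc i) mod n"
    by blast
  then show ?thesis
  proof cases
    case 1
    then show ?thesis using lex(2) vtx_cong[OF 1] by (simp add: vtx_Suc)
  next
    case 2
    then show ?thesis using lex(1) vtx_cong[OF 2] by (simp add: vtx_Suc)
  next
    case 3
    then obtain c d where "0 < c" "0 < d"
      and "vtx n V k - vtx n V (Suc i) = c *\<^sub>R ?q + d *\<^sub>R (- ?p)"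
      using oriented_vertex_cone k by blast
    then have "s *\<^sub>R (vtx n V k - vtx n V (Suc i)) = c *\<^sub>R (s *\<^sub>R ?q) + d *\<^sub>R (s *\<^sub>R (- ?p))"
      by (metis scaleR_add_right scaleR_left_commute)
    then show ?thesis
      using lex \<open>0 < c\<close> \<open>0 < d\<close> lexpos_add lexpos_scaleR_iff by metis
  qed
qed

lemma oriented_imp_cyclically_increasing:
  "cyclically_increasing n (\<lambda>i. s * poly_arg n V i)"
proof (rule cyclically_increasingI)
  show "0 < n" using n by simp
  show "s * poly_arg n V (i mod n) = s * poly_arg n V i" for i
    by (simp add: poly_arg_edge)
  show "s * poly_arg n V (Suc i) \<noteq> s * poly_arg n V i" for i
  proof
    assume "s * poly_arg n V (Suc i) = s * poly_arg n V i"
    then have "poly_arg n V (Suc i) = poly_arg n V i"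
      using oriented_turn[of i] by auto
    then have "cross (edge n V i) (edge n V (Suc i)) = 0"
      using cross_vec_arg[OF oriented_edge_nonzero oriented_edge_nonzero]
      by (simp add: poly_arg_edge)
    then show False
      using oriented_turn[of i] by simp
  qed
  show "Suc i mod n = Suc m mod n"
    if "s * poly_arg n V (Suc i) < s * poly_arg n V i"
      "s * poly_arg n V (Suc m) < s * poly_arg n V m" for i m
  proof (rule ccontr)
    assume "Suc i mod n \<noteq> Suc m mod n"
    then have "lexpos (s *\<^sub>R (vtx n V (Suc m) - vtx n V (Suc i)))"
      "lexpos (s *\<^sub>R (vtx n V (Suc i) - vtx n V (Suc m)))"
      using oriented_descent_lexpos that by (simp_all add: right_diff_distrib)
    moreover have "s *\<^sub>R (vtx n V (Suc i) - vtx n V (Suc m))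
        = - (s *\<^sub>R (vtx n V (Suc m) - vtx n V (Suc i)))"
      by (simp add: algebra_simps)
    ultimately show False
      using lexpos_minus by metis
  qed
qed

end

section \<open>Strictly convex polygons are oriented\<close>

lemma strictly_convex_edge_nonzero:
  assumes "strictly_convex_poly n V" "3 \<le> n"
  shows "edge n V i \<noteq> 0"
proof
  assume "edge n V i = 0"
  then have "collinear {vtx n V i, vtx n V (Suc i), vtx n V (Suc (Suc i))}"
    by (simp add: edge_def collinear_2)
  moreover have "poly_strict n V"
    using assms(1) by (simp add: strictly_convex_poly_def)
  ultimately show False
    using strict_not_collinear[of n V i "Suc (Suc i)"] consecutive_mod_distinct[OF assms(2), of i]
      assms(2) by simp
qed

lemma strictly_convex_edge_supporting_line:
  assumes "strictly_convex_poly n V" "3 \<le> n"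
  obtains a where "inner a (edge n V i) = 0"
    "\<And>j. j mod n \<noteq> i mod n \<Longrightarrow> j mod n \<noteq> Suc i mod n \<Longrightarrow> inner a (vtx n V j - vtx n V i) < 0"
proof -
  have n: "0 < n" using assms(2) by simp
  have strict: "poly_strict n V" and convex: "poly_convex n V"
    using assms(1) by (auto simp: strictly_convex_poly_def)
  let ?A = "vtx n V i" and ?B = "vtx n V (Suc i)"
  define m where "m = midpoint ?A ?B"
  have "m \<in> closed_segment (vtx n V (i mod n)) (vtx n V (Suc (i mod n)))"
    unfolding m_def by (metis mod_Suc_eq vtx_mod midpoint_in_closed_segment)
  then have "m \<in> (\<Union>i<n. closed_segment (vtx n V i) (vtx n V (Suc i)))"
    using n by (intro UN_I[of "i mod n"]) simp_all
  then have "m \<in> frontier (poly_conv n V)"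
    using convex unfolding poly_convex_def by simp
  then have "m \<in> poly_conv n V" "m \<notin> interior (poly_conv n V)"
    using compact_imp_closed[OF poly_conv_compact] by (auto simp: frontier_def)
  then obtain a where "a \<noteq> 0" and a: "\<And>y. y \<in> poly_conv n V \<Longrightarrow> inner a y \<le> inner a m"
    using supporting_hyperplane_not_interior[OF convex_poly_conv] by blast
  have le: "inner a (vtx n V k) \<le> inner a m" for k
    using a vtx_in_poly_conv[OF n] by blast
  have "2 * inner a m = inner a ?A + inner a ?B"
    by (simp add: m_def midpoint_def inner_add_right)
  then have AB: "inner a ?A = inner a m" "inner a ?B = inner a m"
    using le[of i] le[of "Suc i"] by linarith+
  then have "inner a (edge n V i) = 0"
    by (simp add: edge_def inner_diff_right)
  moreover have "inner a (vtx n V j - ?A) < 0"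
    if "j mod n \<noteq> i mod n" "j mod n \<noteq> Suc i mod n" for j
  proof -
    have "\<not> collinear {?A, ?B, vtx n V j}"
      using strict_not_collinear[OF strict n consecutive_mod_distinct(1)[OF assms(2)] that] .
    then have "inner a (vtx n V j) \<noteq> inner a m"
      using collinear_on_line[OF \<open>a \<noteq> 0\<close> AB] by blast
    then show ?thesis
      using le[of j] AB by (simp add: inner_diff_right)
  qed
  ultimately show ?thesis using that by blast
qed

lemma strictly_convex_edge_side:
  assumes "strictly_convex_poly n V" "3 \<le> n"
  obtains t where "\<And>j. j mod n \<noteq> i mod n \<Longrightarrow> j mod n \<noteq> Suc i mod n \<Longrightarrow>
    0 < t * cross (edge n V i) (vtx n V j - vtx n V i)"
proof -
  let ?e = "edge n V i"
  obtain a where ae: "inner a ?e = 0" and below: "\<And>j. j mod n \<noteq> i mod n \<Longrightarrow>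
      j mod n \<noteq> Suc i mod n \<Longrightarrow> inner a (vtx n V j - vtx n V i) < 0"
    using strictly_convex_edge_supporting_line[OF assms] by blast
  have "0 < inner ?e ?e"
    using strictly_convex_edge_nonzero[OF assms] by simp
  moreover have "cross ?e a * cross ?e w = inner ?e ?e * inner a w" for w
    using cross_mult_cross[of ?e a w] ae by (simp add: inner_commute[of ?e a])
  ultimately have "0 < - cross ?e a * cross ?e (vtx n V j - vtx n V i)"
    if "j mod n \<noteq> i mod n" "j mod n \<noteq> Suc i mod n" for j
    using below[OF that] by (simp add: mult_pos_neg del: cross_diff_right)
  then show ?thesis using that by blast
qed

lemma sgn_mult_pos: "0 < x * y \<Longrightarrow> sgn x = sgn (y :: real)"
  by (auto simp: zero_less_mult_iff)

lemma sgn_mult_pos_left: "0 < x * y \<Longrightarrow> 0 < sgn x * (y :: real)"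
  by (auto simp: zero_less_mult_iff)

lemma strictly_convex_imp_oriented:
  assumes "strictly_convex_poly n V" "3 \<le> n"
  obtains \<sigma> where "\<bar>\<sigma>\<bar> = 1" "strictly_convex_oriented n V \<sigma>"
proof -
  have "\<forall>i. \<exists>t. \<forall>j. j mod n \<noteq> i mod n \<longrightarrow> j mod n \<noteq> Suc i mod n \<longrightarrow>
      0 < t * cross (edge n V i) (vtx n V j - vtx n V i)"
    using strictly_convex_edge_side[OF assms] by (metis (no_types))
  then obtain t where t: "\<And>i j. j mod n \<noteq> i mod n \<Longrightarrow> j mod n \<noteq> Suc i mod n \<Longrightarrow>
      0 < t i * cross (edge n V i) (vtx n V j - vtx n V i)"
    by metis
  note distinct = consecutive_mod_distinct[OF assms(2)]
  define c where "c i = cross (edge n V i) (edge n V (Suc i))" for i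
  have pos: "0 < t i * c i" for i
    using t[of "Suc (Suc i)" i] distinct[of i] by (simp add: c_def vtx_Suc)
  have pos_next: "0 < t (Suc i) * c i" for i
    using t[of i "Suc i"] distinct[of i] by (simp add: c_def vtx_Suc cross_antisym[of "edge n V (Suc i)"])
  have "sgn (t (Suc i)) = sgn (t i)" for i
    using sgn_mult_pos[OF pos[of i]] sgn_mult_pos[OF pos_next[of i]] by simp
  then have sgn_t: "sgn (t i) = sgn (t 0)" for i
    by (induction i) simp_all
  have "t 0 \<noteq> 0"
    using pos[of 0] by auto
  then have "\<bar>sgn (t 0)\<bar> = 1" by (simp add: abs_sgn_eq)
  moreover have "strictly_convex_oriented n V (sgn (t 0))"
    unfolding strictly_convex_oriented_def
  proof (intro allI impI)
    fix i j assume "j mod n \<noteq> i mod n \<and> j mod n \<noteq> Suc i mod n"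
    then have "0 < t i * cross (edge n V i) (vtx n V j - vtx n V i)"
      using t by blast
    then show "0 < sgn (t 0) * cross (edge n V i) (vtx n V j - vtx n V i)"
      unfolding sgn_t[of i, symmetric] by (rule sgn_mult_pos_left)
  qed
  ultimately show ?thesis using that by blast
qed

section \<open>Cyclically increasing arguments\<close>

text \<open>Unwrapped angles of the edges, counted from edge \<open>k\<close>; for \<open>\<sigma> = -1\<close> they are the angles
  of the edges reflected in the horizontal axis, hence the factor \<open>\<sigma>\<close> on the sine.\<close>

lemma cyclically_increasing_edge_angles:
  assumes "0 < n" "\<bar>\<sigma>\<bar> = 1" "locally_ordinary n V"
    and "cyclically_increasing n (\<lambda>i. \<sigma> * poly_arg n V i)"
  obtains k \<Phi> where "k < n" "strict_mono \<Phi>" "\<And>t. \<Phi> (t + n) = \<Phi> t + 2 * pi"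
    "\<And>t. edge n V (k + t) =
      (norm (edge n V (k + t)) * cos (\<Phi> t), norm (edge n V (k + t)) * (\<sigma> * sin (\<Phi> t)))"
proof -
  note e = locally_ordinary_edge_nonzero[OF assms(3,1)]
  have arg: "0 \<le> poly_arg n V i" "poly_arg n V i < 2 * pi" for i
    using vec_arg_polar(1,2)[OF e] by (simp_all add: poly_arg_edge)
  have width: "\<sigma> * poly_arg n V i < \<sigma> * poly_arg n V j + 2 * pi" for i j
    using abs_eq_1_cases[OF assms(2)] arg[of i] arg[of j] by auto
  have periodic: "\<sigma> * poly_arg n V (i mod n) = \<sigma> * poly_arg n V i" for i
    by (simp add: poly_arg_edge)
  obtain k \<Phi> where "k < n" "strict_mono \<Phi>" "\<And>t. \<Phi> (t + n) = \<Phi> t + 2 * pi"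
    and \<Phi>: "\<And>t. \<Phi> t = \<sigma> * poly_arg n V (k + t) + 2 * pi * real (t div n)"
    using cyclically_increasing_unwrap[OF assms(4) periodic width] by blast
  moreover have "edge n V (k + t) =
      (norm (edge n V (k + t)) * cos (\<Phi> t), norm (edge n V (k + t)) * (\<sigma> * sin (\<Phi> t)))" for t
  proof -
    have "\<sigma> * poly_arg n V (k + t) = \<Phi> t - 2 * real (t div n) * pi"
      using \<Phi>[of t] by simp
    then show ?thesis
      using vec_arg_polar(3)[OF e, of "k + t"] cos_sin_signed_angle[OF assms(2)]
      by (simp add: poly_arg_edge)
  qed
  ultimately show ?thesis using that by blast
qed

lemma cyclically_increasing_imp_oriented:
  assumes n: "3 \<le> n" and \<sigma>: "\<bar>\<sigma>\<bar> = 1" and lo: "locally_ordinary n V"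
    and incr: "cyclically_increasing n (\<lambda>i. \<sigma> * poly_arg n V i)"
  shows "strictly_convex_oriented n V \<sigma>"
  unfolding strictly_convex_oriented_def
proof (intro allI impI)
  fix i j assume j: "j mod n \<noteq> i mod n \<and> j mod n \<noteq> Suc i mod n"
  have "0 < n" using n by simp
  obtain k \<Phi> where "k < n" "strict_mono \<Phi>" and period: "\<And>t. \<Phi> (t + n) = \<Phi> t + 2 * pi"
    and polar: "\<And>t. edge n V (k + t) =
      (norm (edge n V (k + t)) * cos (\<Phi> t), norm (edge n V (k + t)) * (\<sigma> * sin (\<Phi> t)))"
    using cyclically_increasing_edge_angles[OF \<open>0 < n\<close> \<sigma> lo incr] by blast
  define t0 where "t0 = i + n - k"
  define \<phi> where "\<phi> t = \<Phi> (t0 + t)" for t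
  define w where "w t = norm (edge n V i) * norm (edge n V (i + t))" for t
  have reindex: "k + (t0 + t) = i + t + n" for t
    using \<open>k < n\<close> by (simp add: t0_def)
  have shift: "edge n V (i + t) = edge n V (k + (t0 + t))" for t
    by (simp only: reindex edge_add_period)
  have summand: "\<sigma> * cross (edge n V i) (edge n V (i + t)) = w t * sin (\<phi> t - \<phi> 0)" for t
  proof -
    have "\<sigma> * cross (edge n V (k + t0)) (edge n V (k + (t0 + t))) =
        norm (edge n V (k + t0)) * norm (edge n V (k + (t0 + t))) * sin (\<Phi> (t0 + t) - \<Phi> t0)"
      by (subst polar[of t0], subst polar[of "t0 + t"], rule cross_signed_polar[OF \<sigma>])
    then show ?thesis
      using shift[of t] shift[of 0] by (simp add: w_def \<phi>_def)
  qed
  have sum: "\<sigma> * cross (edge n V i) (vtx n V (i + u) - vtx n V i) = (\<Sum>t<u. w t * sin (\<phi> t - \<phi> 0))"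
    for u by (simp add: sum_edges[symmetric] cross_sum_right sum_distrib_left summand)
  obtain u where u: "2 \<le> u" "u < n" "vtx n V j - vtx n V i = (\<Sum>t<u. edge n V (i + t))"
    using vertex_eq_edge_sum[OF \<open>0 < n\<close>] j by blast
  have "0 < (\<Sum>t<u. w t * sin (\<phi> t - \<phi> 0))"
  proof (rule partial_sum_sin_pos[OF _ _ _ _ u(1,2)])
    show "0 < w t" for t
      using locally_ordinary_edge_nonzero[OF lo \<open>0 < n\<close>] by (simp add: w_def)
    show "strict_mono_on {..<n} \<phi>"
      using \<open>strict_mono \<Phi>\<close> by (simp add: strict_mono_on_def strict_mono_def \<phi>_def)
    show "\<phi> t < \<phi> 0 + 2 * pi" if "t < n" for t
      using strict_monoD[OF \<open>strict_mono \<Phi>\<close>, of "t0 + t" "t0 + n"] that period[of t0]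
      by (simp add: \<phi>_def add.commute)
    show "(\<Sum>t<n. w t * sin (\<phi> t - \<phi> 0)) = 0"
      using sum[of n] by simp
  qed
  then show "0 < \<sigma> * cross (edge n V i) (vtx n V j - vtx n V i)"
    using sum[of u] u(3) by (simp add: sum_edges)
qed

lemma c_strictly_monotone_iff:
  "c_strictly_monotone n V \<longleftrightarrow>
    (\<exists>\<sigma>. \<bar>\<sigma>\<bar> = 1 \<and> locally_ordinary n V \<and> cyclically_increasing n (\<lambda>i. \<sigma> * poly_arg n V i))"
proof
  assume "c_strictly_monotone n V"
  then show "\<exists>\<sigma>. \<bar>\<sigma>\<bar> = 1 \<and> locally_ordinary n V \<and> cyclically_increasing n (\<lambda>i. \<sigma> * poly_arg n V i)"
    unfolding c_strictly_monotone_def c_strictly_increasing_def c_strictly_decreasing_def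
      cyclically_increasing_def
    by (metis abs_1 abs_minus_cancel mult_1 mult_minus1 neg_less_iff_less)
next
  assume "\<exists>\<sigma>. \<bar>\<sigma>\<bar> = 1 \<and> locally_ordinary n V \<and> cyclically_increasing n (\<lambda>i. \<sigma> * poly_arg n V i)"
  then obtain \<sigma> where "\<sigma> = 1 \<or> \<sigma> = -1" "locally_ordinary n V"
      "cyclically_increasing n (\<lambda>i. \<sigma> * poly_arg n V i)"
    using abs_eq_1_cases by blast
  then show "c_strictly_monotone n V"
    unfolding c_strictly_monotone_def c_strictly_increasing_def c_strictly_decreasing_def
      cyclically_increasing_def
    by auto
qed

theorem theorem1p12:
  fixes n :: nat and V :: "nat \<Rightarrow> real \<times> real"
  assumes "n \<ge> 3"
  shows "strictly_convex_poly n V \<longleftrightarrow> c_strictly_monotone n V"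
proof
  assume "strictly_convex_poly n V"
  then obtain \<sigma> where "\<bar>\<sigma>\<bar> = 1" "strictly_convex_oriented n V \<sigma>"
    using strictly_convex_imp_oriented assms by blast
  then show "c_strictly_monotone n V"
    using oriented_locally_ordinary oriented_imp_cyclically_increasing assms
    unfolding c_strictly_monotone_iff by blast
next
  assume "c_strictly_monotone n V"
  then obtain \<sigma> where "\<bar>\<sigma>\<bar> = 1" "locally_ordinary n V"
      "cyclically_increasing n (\<lambda>i. \<sigma> * poly_arg n V i)"
    unfolding c_strictly_monotone_iff by blast
  then show "strictly_convex_poly n V"
    using cyclically_increasing_imp_oriented oriented_imp_strictly_convex assms by blast
qed

end
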